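(* Let $d_1,d_2$ be positive even integers and $d = d_1+d_2-1$; let $n_1,n_2$ be positive integers with $n = n_1+n_2$ and $d_1 n_1 \ge d_2 n_2$. Let $A$ be the $(d+1)\times n_1$ matrix of a regular 3-design of size $n_1$ on $S^d$, written as $A = \begin{pmatrix} A_1 \\ A_2\end{pmatrix}$ with $A_1$ consisting of the first $d_1$ rows and $A_2$ of the last $d_2$ rows, and let $C$ be the $d_1 \times n_2$ matrix of a regular 3-design of size $n_2$ on $S^{d_1-1}$. Put $\alpha = \sqrt{1 - \frac{d_2 n_2}{d_1 n_1}}$ and $\beta = \sqrt{1+\frac{n_2}{n_1}}$. Then the $n$ column vectors of $M = \begin{pmatrix} \alpha A_1 & C \\ \beta A_2 & 0\end{pmatrix}$ form a spherical 3-design on $S^d$.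
   Context: For positive integers $N$ and $m$, $s(m) = \big(\sin(\tfrac{2\pi}{N}km)\big)_{k=1}^N$, $c(m) = \big(\cos(\tfrac{2\pi}{N}km)\big)_{k=1}^N$. A set $S$ of integers is a Sidon-type set of strength $t$ in $\mathbb{Z}_N$ if no non-trivial sum $\varepsilon_1x_1+\cdots+\varepsilon_tx_t$ ($\varepsilon_i\in\{0,\pm1\}$, $x_i\in S$ not necessarily distinct) is $\equiv 0 \bmod N$; non-trivial means some $\varepsilon_i\neq0$ and no element appears with both coefficients $+1$ and $-1$. For $D$ odd and $e=(D+1)/2$, the matrix of a regular $s$-design of size $N$ on $S^D$ is $\sqrt{2/(D+1)}\,A(S)$, where $S=\{m_1,\dots,m_e\}$ is a Sidon-type set of strength $s$ in $\mathbb{Z}_N$ and $A(S)$ is the $2e\times N$ matrix with rows $s(m_1),c(m_1),\dots,s(m_e),c(m_e)$. A collection of points of $S^D\subset\mathbb{R}^{D+1}$ (columns of a matrix, with multiplicity) is a spherical $t$-design if for every polynomial of degree at most $t$ its average over $S^D$ (surface measure) equals its arithmetic average over the points. *)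

theory Defs
  imports "HOL-Analysis.Analysis"
begin

text \<open>Points of R^m are represented as functions nat => real, only coordinates i < m matter.
  Matrices are functions nat => nat => real (row index, column index), indices from 0.\<close>

definition sq_norm :: "nat \<Rightarrow> (nat \<Rightarrow> real) \<Rightarrow> real" where
  "sq_norm m x = (\<Sum>i<m. (x i)\<^sup>2)"

definition exps :: "nat \<Rightarrow> nat \<Rightarrow> (nat \<Rightarrow> nat) set" where
  "exps m t = {a. (\<forall>i\<ge>m. a i = 0) \<and> (\<Sum>i<m. a i) \<le> t}"

definition poly_deg_le :: "nat \<Rightarrow> nat \<Rightarrow> ((nat \<Rightarrow> real) \<Rightarrow> real) \<Rightarrow> bool" where
  "poly_deg_le m t p \<longleftrightarrow>
     (\<exists>c :: (nat \<Rightarrow> nat) \<Rightarrow> real. \<forall>x. p x = (\<Sum>a\<in>exps m t. c a * (\<Prod>i<m. x i ^ a i)))"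

definition lebm :: "nat \<Rightarrow> (nat \<Rightarrow> real) measure" where
  "lebm m = PiM {..<m} (\<lambda>_. lborel)"

definition unit_ball :: "nat \<Rightarrow> (nat \<Rightarrow> real) set" where
  "unit_ball m = {x \<in> space (lebm m). sq_norm m x \<le> 1}"

definition normalize_pt :: "nat \<Rightarrow> (nat \<Rightarrow> real) \<Rightarrow> nat \<Rightarrow> real" where
  "normalize_pt m x = (\<lambda>i. if i < m then x i / sqrt (sq_norm m x) else 0)"

text \<open>The normalized surface measure on the sphere is the push-forward of normalized Lebesgue
  measure on the unit ball under x \<mapsto> x/|x| (cone measure = surface measure on the sphere).\<close>
definition sphere_avg :: "nat \<Rightarrow> ((nat \<Rightarrow> real) \<Rightarrow> real) \<Rightarrow> real" where
  "sphere_avg m f =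
     (LINT x : unit_ball m | lebm m. f (normalize_pt m x)) / measure (lebm m) (unit_ball m)"

definition col :: "nat \<Rightarrow> (nat \<Rightarrow> nat \<Rightarrow> real) \<Rightarrow> nat \<Rightarrow> nat \<Rightarrow> real" where
  "col m X j = (\<lambda>i. if i < m then X i j else 0)"

definition spherical_design :: "nat \<Rightarrow> nat \<Rightarrow> nat \<Rightarrow> (nat \<Rightarrow> nat \<Rightarrow> real) \<Rightarrow> bool" where
  "spherical_design m t N X \<longleftrightarrow>
     (\<forall>j<N. sq_norm m (col m X j) = 1) \<and>
     (\<forall>p. poly_deg_le m t p \<longrightarrow> sphere_avg m p = (\<Sum>j<N. p (col m X j)) / real N)"

definition sidon_type :: "nat \<Rightarrow> nat \<Rightarrow> int set \<Rightarrow> bool" where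
  "sidon_type N t S \<longleftrightarrow>
     (\<forall>(x :: nat \<Rightarrow> int) (\<epsilon> :: nat \<Rightarrow> int).
        (\<forall>i<t. x i \<in> S \<and> \<epsilon> i \<in> {-1, 0, 1}) \<and>
        (\<exists>i<t. \<epsilon> i \<noteq> 0) \<and>
        (\<forall>i<t. \<forall>j<t. x i = x j \<longrightarrow> \<not> (\<epsilon> i = 1 \<and> \<epsilon> j = -1))
        \<longrightarrow> (\<Sum>i<t. \<epsilon> i * x i) mod int N \<noteq> 0)"

text \<open>X is the (D+1) x N matrix of a regular s-design of size N on S^D (D odd):
  X = sqrt(2/(D+1)) A(S) with S = {m_1,...,m_e} a Sidon-type set of strength s, e = (D+1)/2,
  rows s(m_1), c(m_1), ..., s(m_e), c(m_e).  Row 2l / 2l+1 (0-based) is s(m_(l+1)) / c(m_(l+1)),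
  column j (0-based) corresponds to k = j+1.\<close>
definition regular_design_matrix :: "nat \<Rightarrow> nat \<Rightarrow> nat \<Rightarrow> (nat \<Rightarrow> nat \<Rightarrow> real) \<Rightarrow> bool" where
  "regular_design_matrix s D N X \<longleftrightarrow> odd D \<and> N > 0 \<and>
     (\<exists>mm :: nat \<Rightarrow> nat.
        (\<forall>l < (D+1) div 2. mm l > 0) \<and> inj_on mm {..<(D+1) div 2} \<and>
        sidon_type N s (int ` mm ` {..<(D+1) div 2}) \<and>
        (\<forall>i<D+1. \<forall>j<N. X i j = sqrt (2 / real (D+1)) *
            (if even i then sin (2 * pi / real N * real (j+1) * real (mm (i div 2)))
             else cos (2 * pi / real N * real (j+1) * real (mm (i div 2))))))"

end

theory Submission
  imports Defs
begin

text \<open>A matrix with unit columns is a spherical 3-design once its rows sum to zero, are orthogonal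
  of squared length \<open>N / m\<close>, and all triple products of rows sum to zero: over the sphere, monomials
  of odd degree average to zero by reflection symmetry, and \<open>x\<^sub>p x\<^sub>q\<close> averages to
  \<open>\<delta>\<^sub>p\<^sub>q / m\<close> by permutation symmetry and \<open>x\<^sub>1\<^sup>2 + \<dots> + x\<^sub>m\<^sup>2 = 1\<close>.
  For a regular design, product-to-sum formulas turn these sums into sums of sines over the
  \<open>N\<close>-th roots of unity at frequencies \<open>\<plusminus>m\<^sub>a \<plusminus> m\<^sub>b \<plusminus> m\<^sub>c\<close>, which vanish by the
  Sidon property. The block matrix \<open>M\<close> inherits the moment conditions from \<open>A\<close> and \<open>C\<close>: the
  values of \<open>\<alpha>\<close> and \<open>\<beta>\<close> are exactly those making the second moments equal to
  \<open>(n\<^sub>1 + n\<^sub>2) / (d\<^sub>1 + d\<^sub>2)\<close> and the columns unit vectors, the latter because every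
  \<open>(sin, cos)\<close> pair of rows of \<open>A\<close> contributes exactly \<open>2 / (d\<^sub>1 + d\<^sub>2)\<close> to each column.\<close>

section \<open>Sums of sines with Sidon-type frequencies\<close>

definition root_angle :: "nat \<Rightarrow> nat \<Rightarrow> real" where
  "root_angle N j = 2 * pi * real (Suc j) / real N"

lemma sum_sin_root_angle_eq_0:
  fixes r :: int
  assumes N: "N > 0" and r: "r mod int N \<noteq> 0"
  shows "(\<Sum>j<N. sin (root_angle N j * of_int r + \<phi>)) = 0"
proof -
  define w where "w = cis (2 * pi * of_int r / real N)"
  have "w \<noteq> 1"
  proof
    assume "w = 1"
    then obtain k :: int where "2 * pi * of_int r / real N = 2 * pi * of_int k"
      by (auto simp: w_def complex_eq_iff cos_one_2pi_int)
    then have "of_int r = real N * of_int k"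
      using N by (simp add: field_simps)
    then have "r = int N * k"
      by (metis of_int_eq_iff of_int_mult of_int_of_nat_eq)
    with r show False by simp
  qed
  moreover have "w ^ N = 1"
    unfolding w_def Complex.DeMoivre using N by simp
  ultimately have "(\<Sum>j<N. w ^ j) = 0"
    by (simp add: sum_gp_strict)
  have "(\<Sum>j<N. cis (root_angle N j * of_int r + \<phi>)) = cis \<phi> * w * (\<Sum>j<N. w ^ j)"
    unfolding sum_distrib_left
  proof (intro sum.cong refl)
    fix j
    have "cis \<phi> * w * w ^ j = cis \<phi> * w ^ Suc j"
      by simp
    also have "w ^ Suc j = cis (real (Suc j) * (2 * pi * of_int r / real N))"
      unfolding w_def by (rule Complex.DeMoivre)
    also have "cis \<phi> * \<dots> = cis (real (Suc j) * (2 * pi * of_int r / real N) + \<phi>)"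
      by (simp add: cis_mult add.commute)
    also have "real (Suc j) * (2 * pi * of_int r / real N) = root_angle N j * of_int r"
      by (simp add: root_angle_def)
    finally show "cis (root_angle N j * of_int r + \<phi>) = cis \<phi> * w * w ^ j" ..
  qed
  also have "\<dots> = 0" using \<open>(\<Sum>j<N. w ^ j) = 0\<close> by simp
  finally have "Im (\<Sum>j<N. cis (root_angle N j * of_int r + \<phi>)) = 0"
    by simp
  then show ?thesis
    by (simp add: Im_sum)
qed

lemma sin_mult_sin_phase:
  fixes x a b :: real
  shows "sin (x * a + \<phi>) * sin (x * b + \<psi>) =
     (sin (x * (a - b) + (\<phi> - \<psi> + pi / 2)) - sin (x * (a + b) + (\<phi> + \<psi> + pi / 2))) / 2"
  by (simp add: sin_add cos_add sin_diff cos_diff algebra_simps)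

lemma sin_mult_sin_mult_sin_phase:
  fixes x a b c :: real
  shows "sin (x * a + \<phi>) * sin (x * b + \<psi>) * sin (x * c + \<omega>) =
     (sin (x * (a + b - c) + (\<phi> + \<psi> - \<omega>)) + sin (x * (b + c - a) + (\<psi> + \<omega> - \<phi>)) +
      sin (x * (c + a - b) + (\<omega> + \<phi> - \<psi>)) - sin (x * (a + b + c) + (\<phi> + \<psi> + \<omega>))) / 4"
  by (simp add: sin_add cos_add sin_diff cos_diff algebra_simps power2_eq_square)

lemma sidon_type_3D:
  fixes a b c x y z :: int
  assumes sidon: "sidon_type N 3 S" and "x \<in> S" "y \<in> S" "z \<in> S"
    and "a \<in> {-1, 0, 1}" "b \<in> {-1, 0, 1}" "c \<in> {-1, 0, 1}" "a \<noteq> 0 \<or> b \<noteq> 0 \<or> c \<noteq> 0"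
    and "x = y \<Longrightarrow> a * b \<noteq> -1" "x = z \<Longrightarrow> a * c \<noteq> -1" "y = z \<Longrightarrow> b * c \<noteq> -1"
  shows "(a * x + b * y + c * z) mod int N \<noteq> 0"
proof -
  define xs where "xs i = [x, y, z] ! i" for i :: nat
  define es where "es i = [a, b, c] ! i" for i :: nat
  have all_less_3: "(\<forall>i<3. P i) \<longleftrightarrow> P 0 \<and> P 1 \<and> P 2" for P :: "nat \<Rightarrow> bool"
    by (auto simp: numeral_3_eq_3 numeral_2_eq_2 less_Suc_eq)
  have ex_less_3: "(\<exists>i<3. P i) \<longleftrightarrow> P 0 \<or> P 1 \<or> P 2" for P :: "nat \<Rightarrow> bool"
    by (auto simp: numeral_3_eq_3 numeral_2_eq_2 less_Suc_eq)
  have "(\<forall>i<3. xs i \<in> S \<and> es i \<in> {-1, 0, 1}) \<and> (\<exists>i<3. es i \<noteq> 0) \<and>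
      (\<forall>i<3. \<forall>j<3. xs i = xs j \<longrightarrow> \<not> (es i = 1 \<and> es j = -1))"
    unfolding all_less_3 ex_less_3 using assms(2-)
    by (simp add: xs_def es_def) (intro conjI impI; clarsimp)
  with sidon have "(\<Sum>i<3. es i * xs i) mod int N \<noteq> 0"
    unfolding sidon_type_def by (elim allE[of _ xs] allE[of _ es]) (rule mp)
  then show ?thesis
    by (simp add: numeral_3_eq_3 xs_def es_def add.assoc)
qed

context
  fixes N :: nat and S :: "int set"
  assumes sidon: "sidon_type N 3 S"
begin

lemma sidon_type_3_single: "x \<in> S \<Longrightarrow> x mod int N \<noteq> 0"
  using sidon_type_3D[OF sidon, of x x x 1 0 0] by simp

lemma sidon_type_3_add: "x \<in> S \<Longrightarrow> y \<in> S \<Longrightarrow> (x + y) mod int N \<noteq> 0"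
  using sidon_type_3D[OF sidon, of x y y 1 1 0] by simp

lemma sidon_type_3_diff: "x \<in> S \<Longrightarrow> y \<in> S \<Longrightarrow> x \<noteq> y \<Longrightarrow> (x - y) mod int N \<noteq> 0"
  using sidon_type_3D[OF sidon, of x y y 1 "-1" 0] by simp

lemma sidon_type_3_add3: "x \<in> S \<Longrightarrow> y \<in> S \<Longrightarrow> z \<in> S \<Longrightarrow> (x + y + z) mod int N \<noteq> 0"
  using sidon_type_3D[OF sidon, of x y z 1 1 1] by simp

lemma sidon_type_3_add_diff:
  assumes "x \<in> S" "y \<in> S" "z \<in> S"
  shows "(x + y - z) mod int N \<noteq> 0"
proof (cases "z = x \<or> z = y")
  case True
  then show ?thesis
    using sidon_type_3_single assms by (auto simp: dvd_eq_mod_eq_0)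
next
  case False
  then show ?thesis
    using sidon_type_3D[OF sidon, of x y z 1 1 "-1"] assms by auto
qed

end

text \<open>The cosine rows are the odd ones, written as \<open>cos t = sin (t + pi / 2)\<close>.\<close>

definition row_phase :: "nat \<Rightarrow> real" where
  "row_phase i = (if even i then 0 else pi / 2)"

lemma cos_row_phase_diff:
  assumes "p div 2 = q div 2"
  shows "cos (row_phase p - row_phase q) = (if p = q then 1 else 0)"
proof (cases "p = q")
  case False
  with assms have "even p \<and> odd q \<or> odd p \<and> even q"
    by presburger
  with False show ?thesis
    by (auto simp: row_phase_def)
qed simp

context
  fixes N m :: nat and X :: "nat \<Rightarrow> nat \<Rightarrow> real" and f :: "nat \<Rightarrow> int" and c :: real
  assumes N: "N > 0"
    and sidon: "sidon_type N 3 (f ` {..<m})"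
    and same_freq: "\<And>p q. p < m \<Longrightarrow> q < m \<Longrightarrow> f p = f q \<longleftrightarrow> p div 2 = q div 2"
    and X: "\<And>i j. i < m \<Longrightarrow> j < N \<Longrightarrow> X i j = c * sin (root_angle N j * of_int (f i) + row_phase i)"
begin

lemma sine_rows_sum:
  assumes "p < m"
  shows "(\<Sum>j<N. X p j) = 0"
proof -
  have "(\<Sum>j<N. X p j) = c * (\<Sum>j<N. sin (root_angle N j * of_int (f p) + row_phase p))"
    using assms by (simp add: X sum_distrib_left)
  also have "(\<Sum>j<N. sin (root_angle N j * of_int (f p) + row_phase p)) = 0"
    using assms by (intro sum_sin_root_angle_eq_0 N sidon_type_3_single[OF sidon]) auto
  finally show ?thesis
    by simp
qed

lemma sine_rows_inner:
  assumes p: "p < m" and q: "q < m"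
  shows "(\<Sum>j<N. X p j * X q j) = (if p = q then c\<^sup>2 * real N / 2 else 0)"
proof -
  let ?S = "\<lambda>r \<psi>. \<Sum>j<N. sin (root_angle N j * of_int r + \<psi>)"
  have "(\<Sum>j<N. X p j * X q j) =
      c\<^sup>2 * (\<Sum>j<N. sin (root_angle N j * of_int (f p) + row_phase p) *
        sin (root_angle N j * of_int (f q) + row_phase q))"
    using p q by (simp add: X sum_distrib_left power2_eq_square mult_ac)
  also have "\<dots> = c\<^sup>2 * (?S (f p - f q) (row_phase p - row_phase q + pi / 2) -
      ?S (f p + f q) (row_phase p + row_phase q + pi / 2)) / 2"
    by (simp add: sin_mult_sin_phase flip: sum_subtractf sum_divide_distrib)
  also have "?S (f p + f q) (row_phase p + row_phase q + pi / 2) = 0"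
    using p q by (intro sum_sin_root_angle_eq_0 N sidon_type_3_add[OF sidon]) auto
  also have "?S (f p - f q) (row_phase p - row_phase q + pi / 2) = (if p = q then real N else 0)"
  proof (cases "p div 2 = q div 2")
    case True
    then have "f p - f q = 0"
      using same_freq p q by simp
    then show ?thesis
      using cos_row_phase_diff[OF True] by (simp add: sin_add)
  next
    case False
    then have "f p \<noteq> f q" "p \<noteq> q"
      using same_freq p q by auto
    with p q show ?thesis
      using sum_sin_root_angle_eq_0[OF N sidon_type_3_diff[OF sidon], of "f p" "f q"] by simp
  qed
  finally show ?thesis
    by (cases "p = q") simp_all
qed

lemma sine_rows_triple:
  assumes p: "p < m" and q: "q < m" and r: "r < m"
  shows "(\<Sum>j<N. X p j * X q j * X r j) = 0"
proof -
  let ?S = "\<lambda>r \<psi>. \<Sum>j<N. sin (root_angle N j * of_int r + \<psi>)"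
  let ?a = "f p" and ?b = "f q" and ?c = "f r"
  let ?\<phi> = "row_phase p" and ?\<psi> = "row_phase q" and ?\<omega> = "row_phase r"
  have "(\<Sum>j<N. X p j * X q j * X r j) =
      c ^ 3 * (\<Sum>j<N. sin (root_angle N j * of_int ?a + ?\<phi>) *
        sin (root_angle N j * of_int ?b + ?\<psi>) * sin (root_angle N j * of_int ?c + ?\<omega>))"
    using p q r by (simp add: X sum_distrib_left power3_eq_cube mult_ac)
  also have "\<dots> = c ^ 3 * (?S (?a + ?b - ?c) (?\<phi> + ?\<psi> - ?\<omega>) + ?S (?b + ?c - ?a) (?\<psi> + ?\<omega> - ?\<phi>) +
      ?S (?c + ?a - ?b) (?\<omega> + ?\<phi> - ?\<psi>) - ?S (?a + ?b + ?c) (?\<phi> + ?\<psi> + ?\<omega>)) / 4"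
    by (simp add: sin_mult_sin_mult_sin_phase flip: sum.distrib sum_subtractf sum_divide_distrib)
  also have "\<dots> = 0"
    using p q r
      sum_sin_root_angle_eq_0[OF N sidon_type_3_add_diff[OF sidon], of ?a ?b ?c]
      sum_sin_root_angle_eq_0[OF N sidon_type_3_add_diff[OF sidon], of ?b ?c ?a]
      sum_sin_root_angle_eq_0[OF N sidon_type_3_add_diff[OF sidon], of ?c ?a ?b]
      sum_sin_root_angle_eq_0[OF N sidon_type_3_add3[OF sidon], of ?a ?b ?c]
    by simp
  finally show ?thesis .
qed

lemma sine_rows_col_partial_norm:
  assumes "2 * k \<le> m" "j < N"
  shows "(\<Sum>i<2 * k. (X i j)\<^sup>2) = real k * c\<^sup>2"
  using assms(1)
proof (induction k)
  case (Suc k)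
  have "f (Suc (2 * k)) = f (2 * k)"
    using Suc.prems same_freq by simp
  then have "(X (2 * k) j)\<^sup>2 + (X (Suc (2 * k)) j)\<^sup>2 = c\<^sup>2"
    using Suc.prems assms(2)
    by (simp add: X row_phase_def sin_add power_mult_distrib flip: distrib_left)
  with Suc show ?case
    by (simp add: algebra_simps)
qed simp

end

section \<open>Regular designs satisfy the moment conditions of a 3-design\<close>

definition design3_moments :: "nat \<Rightarrow> nat \<Rightarrow> (nat \<Rightarrow> nat \<Rightarrow> real) \<Rightarrow> bool" where
  "design3_moments m N X \<longleftrightarrow>
     (\<forall>j<N. (\<Sum>i<m. (X i j)\<^sup>2) = 1) \<and>
     (\<forall>p<m. (\<Sum>j<N. X p j) = 0) \<and>
     (\<forall>p<m. \<forall>q<m. (\<Sum>j<N. X p j * X q j) = (if p = q then real N / real m else 0)) \<and>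
     (\<forall>p<m. \<forall>q<m. \<forall>r<m. (\<Sum>j<N. X p j * X q j * X r j) = 0)"

lemma regular_design_matrixE:
  assumes "regular_design_matrix s D N X"
  obtains f :: "nat \<Rightarrow> int" where "N > 0" "odd D" "sidon_type N s (f ` {..<D + 1})"
    "\<And>p q. p < D + 1 \<Longrightarrow> q < D + 1 \<Longrightarrow> f p = f q \<longleftrightarrow> p div 2 = q div 2"
    "\<And>i j. i < D + 1 \<Longrightarrow> j < N \<Longrightarrow>
      X i j = sqrt (2 / real (D + 1)) * sin (root_angle N j * of_int (f i) + row_phase i)"
proof -
  obtain mm where D: "odd D" and N: "N > 0" and inj: "inj_on mm {..<(D + 1) div 2}"
    and sidon: "sidon_type N s (int ` mm ` {..<(D + 1) div 2})"
    and X: "\<forall>i<D + 1. \<forall>j<N. X i j = sqrt (2 / real (D + 1)) *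
      (if even i then sin (2 * pi / real N * real (j + 1) * real (mm (i div 2)))
       else cos (2 * pi / real N * real (j + 1) * real (mm (i div 2))))"
    using assms unfolding regular_design_matrix_def by blast
  define f where "f i = int (mm (i div 2))" for i
  have pairs: "(\<lambda>i. i div 2) ` {..<D + 1} = {..<(D + 1) div 2}"
  proof (intro equalityI subsetI)
    fix k assume "k \<in> {..<(D + 1) div 2}"
    then have "2 * k < D + 1" "k = 2 * k div 2"
      by auto
    then show "k \<in> (\<lambda>i. i div 2) ` {..<D + 1}"
      by blast
  qed (use D in auto)
  have "f ` {..<D + 1} = int ` mm ` {..<(D + 1) div 2}"
    unfolding f_def pairs[symmetric] by (simp add: image_image)
  moreover have "f p = f q \<longleftrightarrow> p div 2 = q div 2" if "p < D + 1" "q < D + 1" for p q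
    using inj_onD[OF inj] that D unfolding f_def by (metis lessThan_iff imageI pairs of_nat_eq_iff)
  moreover have "X i j = sqrt (2 / real (D + 1)) * sin (root_angle N j * of_int (f i) + row_phase i)"
    if "i < D + 1" "j < N" for i j
    using X that by (simp add: f_def root_angle_def row_phase_def sin_add mult_ac)
  ultimately show ?thesis
    using that[of f] N D sidon by simp
qed

lemma regular_design_matrix_col_partial_norm:
  assumes "regular_design_matrix 3 D N X" "2 * k \<le> D + 1" "j < N"
  shows "(\<Sum>i<2 * k. (X i j)\<^sup>2) = 2 * real k / real (D + 1)"
proof -
  obtain f where "N > 0" "sidon_type N 3 (f ` {..<D + 1})"
    "\<And>p q. p < D + 1 \<Longrightarrow> q < D + 1 \<Longrightarrow> f p = f q \<longleftrightarrow> p div 2 = q div 2"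
    "\<And>i j. i < D + 1 \<Longrightarrow> j < N \<Longrightarrow>
      X i j = sqrt (2 / real (D + 1)) * sin (root_angle N j * of_int (f i) + row_phase i)"
    using regular_design_matrixE[OF assms(1)] by metis
  from sine_rows_col_partial_norm[OF this assms(2,3)] show ?thesis
    by simp
qed

lemma regular_design_matrix_design3_moments:
  assumes "regular_design_matrix 3 D N X"
  shows "design3_moments (D + 1) N X"
proof -
  obtain f where N: "N > 0" and D: "odd D" and rows: "sidon_type N 3 (f ` {..<D + 1})"
    "\<And>p q. p < D + 1 \<Longrightarrow> q < D + 1 \<Longrightarrow> f p = f q \<longleftrightarrow> p div 2 = q div 2"
    "\<And>i j. i < D + 1 \<Longrightarrow> j < N \<Longrightarrow>
      X i j = sqrt (2 / real (D + 1)) * sin (root_angle N j * of_int (f i) + row_phase i)"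
    using regular_design_matrixE[OF assms] by metis
  have pairs: "2 * ((D + 1) div 2) = D + 1"
    using D by simp
  then have "2 * real ((D + 1) div 2) = real (D + 1)"
    by linarith
  then have "(\<Sum>i<D + 1. (X i j)\<^sup>2) = 1" if "j < N" for j
    using regular_design_matrix_col_partial_norm[OF assms, of "(D + 1) div 2" j, unfolded pairs] that
    by simp
  moreover have "(sqrt (2 / real (D + 1)))\<^sup>2 * real N / 2 = real N / real (D + 1)"
    by (simp add: field_simps)
  ultimately show ?thesis
    unfolding design3_moments_def
    using sine_rows_sum[OF N rows] sine_rows_inner[OF N rows] sine_rows_triple[OF N rows]
    by simp
qed

section \<open>Sphere averages of monomials of degree at most 3\<close>

definition coord_prod :: "nat list \<Rightarrow> (nat \<Rightarrow> real) \<Rightarrow> real" where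
  "coord_prod qs x = (\<Prod>i\<leftarrow>qs. x i)"

interpretation lborel_prod: product_sigma_finite "(\<lambda>_. lborel) :: nat \<Rightarrow> real measure"
  by standard

lemma space_lebm: "space (lebm m) = PiE {..<m} (\<lambda>_. UNIV)"
  by (simp add: lebm_def space_PiM)

lemma lebm_component_measurable: "i < m \<Longrightarrow> (\<lambda>x. x i) \<in> borel_measurable (lebm m)"
  unfolding lebm_def by measurable

lemma sq_norm_measurable [measurable]: "sq_norm m \<in> borel_measurable (lebm m)"
  unfolding sq_norm_def[abs_def] by (intro borel_measurable_sum borel_measurable_power lebm_component_measurable) simp

lemma unit_ball_sets [measurable]: "unit_ball m \<in> sets (lebm m)"
  unfolding unit_ball_def by measurable

lemma coord_prod_normalize_measurable:
  assumes "set qs \<subseteq> {..<m}"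
  shows "(\<lambda>x. coord_prod qs (normalize_pt m x)) \<in> borel_measurable (lebm m)"
  using assms unfolding coord_prod_def
proof (induction qs)
  case (Cons q qs)
  then have [measurable]: "(\<lambda>x. x q) \<in> borel_measurable (lebm m)"
    by (simp add: lebm_component_measurable)
  from Cons show ?case
    by (simp add: normalize_pt_def)
qed simp

lemma coord_le_sq_norm: "i < m \<Longrightarrow> (x i)\<^sup>2 \<le> sq_norm m x"
  unfolding sq_norm_def by (rule member_le_sum) auto

lemma sq_norm_nonneg: "sq_norm m x \<ge> 0"
  unfolding sq_norm_def by (simp add: sum_nonneg)

lemma abs_normalize_pt_le_1: "\<bar>normalize_pt m x i\<bar> \<le> 1"
proof (cases "i < m \<and> sq_norm m x \<noteq> 0")
  case True
  then have "\<bar>x i\<bar> \<le> sqrt (sq_norm m x)" "sqrt (sq_norm m x) > 0"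
    using real_sqrt_le_mono[OF coord_le_sq_norm[of i m x]] sq_norm_nonneg[of m x] by auto
  with True show ?thesis
    by (simp add: normalize_pt_def abs_divide)
qed (auto simp: normalize_pt_def)

lemma abs_coord_prod_normalize_le_1: "\<bar>coord_prod qs (normalize_pt m x)\<bar> \<le> 1"
  unfolding coord_prod_def
proof (induction qs)
  case (Cons q qs)
  then show ?case
    using abs_normalize_pt_le_1[of m x q] by (simp add: abs_mult mult_le_one)
qed simp

lemma emeasure_unit_ball_finite: "emeasure (lebm m) (unit_ball m) < \<infinity>"
proof -
  have "unit_ball m \<subseteq> PiE {..<m} (\<lambda>_. {-1..1})"
  proof
    fix x assume x: "x \<in> unit_ball m"
    have "(x i)\<^sup>2 \<le> 1" if "i < m" for i
      using coord_le_sq_norm[OF that, of x] x by (simp add: unit_ball_def)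
    then have "\<bar>x i\<bar> \<le> 1" if "i < m" for i
      using that by (simp add: abs_square_le_1)
    with x show "x \<in> PiE {..<m} (\<lambda>_. {-1..1})"
      by (auto simp: unit_ball_def space_lebm PiE_iff abs_le_iff)
  qed
  then have "emeasure (lebm m) (unit_ball m) \<le> emeasure (lebm m) (PiE {..<m} (\<lambda>_. {-1..1}))"
    by (intro emeasure_mono) (auto simp: lebm_def)
  also have "\<dots> = (\<Prod>i<m. emeasure lborel {-1..(1::real)})"
    unfolding lebm_def by (rule lborel_prod.emeasure_PiM) auto
  also have "\<dots> < \<infinity>"
    by (simp add: power_less_top_ennreal)
  finally show ?thesis .
qed

lemma measure_unit_ball_pos:
  assumes m: "m > 0"
  shows "measure (lebm m) (unit_ball m) > 0"
proof -
  have cube: "PiE {..<m} (\<lambda>_. {0..1 / real m}) \<subseteq> unit_ball m"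
  proof
    fix x assume x: "x \<in> PiE {..<m} (\<lambda>_. {0..1 / real m})"
    have "(x i)\<^sup>2 \<le> 1 / real m" if "i < m" for i
    proof -
      have "0 \<le> x i" "x i \<le> 1 / real m" "1 / real m \<le> 1"
        using x that m by (auto simp: PiE_iff)
      then show ?thesis
        by (metis power2_eq_square mult_left_le order_trans)
    qed
    then have "sq_norm m x \<le> (\<Sum>i<m. 1 / real m)"
      unfolding sq_norm_def by (intro sum_mono) auto
    with x m show "x \<in> unit_ball m"
      by (auto simp: unit_ball_def space_lebm PiE_iff)
  qed
  have "emeasure (lebm m) (PiE {..<m} (\<lambda>_. {0..1 / real m})) = (\<Prod>i<m. emeasure lborel {0..1 / real m})"
    unfolding lebm_def by (rule lborel_prod.emeasure_PiM) auto
  also have "\<dots> = ennreal ((1 / real m) ^ m)"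
    by (simp add: ennreal_power)
  finally have "0 < emeasure (lebm m) (PiE {..<m} (\<lambda>_. {0..1 / real m}))"
    using m by simp
  also have "\<dots> \<le> emeasure (lebm m) (unit_ball m)"
    by (rule emeasure_mono[OF cube unit_ball_sets])
  finally have "0 < emeasure (lebm m) (unit_ball m)" .
  moreover have "emeasure (lebm m) (unit_ball m) = ennreal (measure (lebm m) (unit_ball m))"
    using emeasure_unit_ball_finite[of m] by (intro emeasure_eq_ennreal_measure) simp
  ultimately show ?thesis
    by simp
qed

lemma set_integrable_coord_prod_normalize:
  "set qs \<subseteq> {..<m} \<Longrightarrow> set_integrable (lebm m) (unit_ball m) (\<lambda>x. coord_prod qs (normalize_pt m x))"
  unfolding set_integrable_def
  by (intro integrableI_bounded_set_indicator[where B = 1] unit_ball_sets emeasure_unit_ball_finite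
      coord_prod_normalize_measurable AE_I2) (auto simp: abs_coord_prod_normalize_le_1)

text \<open>The restriction to \<open>{..<m}\<close> keeps the points of \<open>space (lebm m)\<close> extensional.\<close>

definition signed_perm :: "nat \<Rightarrow> (nat \<Rightarrow> nat) \<Rightarrow> (nat \<Rightarrow> real) \<Rightarrow> (nat \<Rightarrow> real) \<Rightarrow> nat \<Rightarrow> real"
  where "signed_perm m \<sigma> \<epsilon> x = (\<lambda>i\<in>{..<m}. \<epsilon> i * x (\<sigma> i))"

lemma emeasure_lborel_vimage_sign:
  fixes c :: real
  assumes c: "\<bar>c\<bar> = 1" and B: "B \<in> sets borel"
  shows "emeasure lborel ((\<lambda>y. c * y) -` B) = emeasure lborel B"
proof -
  have "emeasure lborel ((\<lambda>y. c * y) -` B) = emeasure (distr lborel borel ((*) c)) B"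
    using B by (subst emeasure_distr) auto
  also have "distr lborel borel ((*) c) = lborel"
    using c lborel_distr_mult[of c] by (simp add: density_1)
  finally show ?thesis .
qed

context
  fixes m :: nat and \<sigma> :: "nat \<Rightarrow> nat" and \<epsilon> :: "nat \<Rightarrow> real"
  assumes \<sigma>: "\<sigma> permutes {..<m}" and \<epsilon>: "\<And>i. \<bar>\<epsilon> i\<bar> = 1"
begin

lemma signed_perm_measurable: "signed_perm m \<sigma> \<epsilon> \<in> lebm m \<rightarrow>\<^sub>M lebm m"
  unfolding signed_perm_def lebm_def
proof (rule measurable_restrict)
  fix i assume "i \<in> {..<m}"
  then have "\<sigma> i \<in> {..<m}"
    using permutes_in_image[OF \<sigma>] by simp
  then show "(\<lambda>x. \<epsilon> i * x (\<sigma> i)) \<in> PiM {..<m} (\<lambda>_. lborel) \<rightarrow>\<^sub>M lborel"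
    by measurable
qed

lemma signed_perm_vimage_PiE:
  "signed_perm m \<sigma> \<epsilon> -` PiE {..<m} A \<inter> space (lebm m) =
    PiE {..<m} (\<lambda>j. (\<lambda>y. \<epsilon> (inv \<sigma> j) * y) -` A (inv \<sigma> j))" (is "_ = PiE _ ?B")
proof (intro set_eqI)
  fix x
  have "(\<forall>j\<in>{..<m}. x j \<in> ?B j) \<longleftrightarrow> (\<forall>j\<in>\<sigma> ` {..<m}. x j \<in> ?B j)"
    by (simp add: permutes_image[OF \<sigma>])
  also have "\<dots> \<longleftrightarrow> (\<forall>i\<in>{..<m}. \<epsilon> i * x (\<sigma> i) \<in> A i)"
    by (simp add: permutes_inverses[OF \<sigma>])
  finally have "x \<in> PiE {..<m} ?B \<longleftrightarrow> x \<in> extensional {..<m} \<and> (\<forall>i\<in>{..<m}. \<epsilon> i * x (\<sigma> i) \<in> A i)"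
    unfolding PiE_iff by blast
  moreover have "signed_perm m \<sigma> \<epsilon> x \<in> PiE {..<m} A \<longleftrightarrow> (\<forall>i\<in>{..<m}. \<epsilon> i * x (\<sigma> i) \<in> A i)"
    by (simp add: signed_perm_def restrict_PiE_iff Pi_iff)
  moreover have "x \<in> space (lebm m) \<longleftrightarrow> x \<in> extensional {..<m}"
    by (simp add: space_lebm PiE_iff)
  ultimately show "x \<in> signed_perm m \<sigma> \<epsilon> -` PiE {..<m} A \<inter> space (lebm m) \<longleftrightarrow> x \<in> PiE {..<m} ?B"
    by (simp add: conj_commute)
qed

lemma lebm_distr_signed_perm: "distr (lebm m) (lebm m) (signed_perm m \<sigma> \<epsilon>) = lebm m"
  unfolding lebm_def
proof (rule lborel_prod.PiM_eqI)
  fix A :: "nat \<Rightarrow> real set" assume A: "\<And>i. i \<in> {..<m} \<Longrightarrow> A i \<in> sets lborel"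
  have inv_in: "inv \<sigma> j \<in> {..<m}" if "j \<in> {..<m}" for j
    using permutes_in_image[OF permutes_inv[OF \<sigma>]] that by simp
  have vimage_sets: "(\<lambda>y. \<epsilon> (inv \<sigma> j) * y) -` A (inv \<sigma> j) \<in> sets borel" if "j \<in> {..<m}" for j
    using measurable_sets[OF _ A[OF inv_in[OF that]], of "\<lambda>y. \<epsilon> (inv \<sigma> j) * y" borel] by simp
  have "emeasure (distr (lebm m) (lebm m) (signed_perm m \<sigma> \<epsilon>)) (PiE {..<m} A) =
      emeasure (lebm m) (signed_perm m \<sigma> \<epsilon> -` PiE {..<m} A \<inter> space (lebm m))"
    using A by (intro emeasure_distr signed_perm_measurable) (simp add: lebm_def sets_PiM_I_finite)
  also have "\<dots> = (\<Prod>j<m. emeasure lborel ((\<lambda>y. \<epsilon> (inv \<sigma> j) * y) -` A (inv \<sigma> j)))"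
    unfolding signed_perm_vimage_PiE unfolding lebm_def
    by (rule lborel_prod.emeasure_PiM) (simp_all add: vimage_sets)
  also have "\<dots> = (\<Prod>j<m. emeasure lborel (A (inv \<sigma> j)))"
    using A inv_in by (intro prod.cong refl) (simp add: emeasure_lborel_vimage_sign \<epsilon>)
  also have "\<dots> = (\<Prod>i<m. emeasure lborel (A i))"
    by (rule prod.permutes_inv[OF \<sigma>, of "\<lambda>_ i. emeasure lborel (A i)", symmetric])
  finally show "emeasure (distr (PiM {..<m} (\<lambda>_. lborel)) (PiM {..<m} (\<lambda>_. lborel)) (signed_perm m \<sigma> \<epsilon>))
      (PiE {..<m} A) = (\<Prod>i<m. emeasure lborel (A i))"
    by (simp only: lebm_def)
qed (simp_all add: lebm_def)

lemma sq_norm_signed_perm: "sq_norm m (signed_perm m \<sigma> \<epsilon> x) = sq_norm m x"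
proof -
  have "(\<epsilon> i)\<^sup>2 = 1" for i
    using \<epsilon>[of i] by (metis power2_abs one_power2)
  then have "sq_norm m (signed_perm m \<sigma> \<epsilon> x) = (\<Sum>i<m. (x (\<sigma> i))\<^sup>2)"
    unfolding sq_norm_def signed_perm_def by (simp add: power_mult_distrib)
  also have "\<dots> = sq_norm m x"
    unfolding sq_norm_def using sum.permute[OF \<sigma>, of "\<lambda>i. (x i)\<^sup>2"] by (simp add: comp_def)
  finally show ?thesis .
qed

lemma normalize_pt_signed_perm:
  "i < m \<Longrightarrow> normalize_pt m (signed_perm m \<sigma> \<epsilon> x) i = \<epsilon> i * normalize_pt m x (\<sigma> i)"
  using permutes_in_image[OF \<sigma>, of i]
  unfolding normalize_pt_def sq_norm_signed_perm by (simp add: signed_perm_def)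

lemma coord_prod_normalize_signed_perm:
  assumes "set qs \<subseteq> {..<m}"
  shows "coord_prod qs (normalize_pt m (signed_perm m \<sigma> \<epsilon> x)) =
    (\<Prod>i\<leftarrow>qs. \<epsilon> i) * coord_prod (map \<sigma> qs) (normalize_pt m x)"
  using assms unfolding coord_prod_def by (induction qs) (auto simp: normalize_pt_signed_perm)

lemma set_integral_unit_ball_signed_perm:
  fixes g :: "(nat \<Rightarrow> real) \<Rightarrow> real"
  assumes g: "g \<in> borel_measurable (lebm m)"
  shows "(LINT x:unit_ball m|lebm m. g (signed_perm m \<sigma> \<epsilon> x)) = (LINT x:unit_ball m|lebm m. g x)"
proof -
  have ball: "signed_perm m \<sigma> \<epsilon> x \<in> unit_ball m \<longleftrightarrow> x \<in> unit_ball m" if "x \<in> space (lebm m)" for x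
    using that by (simp add: unit_ball_def sq_norm_signed_perm measurable_space[OF signed_perm_measurable])
  have "(LINT x:unit_ball m|lebm m. g (signed_perm m \<sigma> \<epsilon> x)) =
      (\<integral>x. indicator (unit_ball m) (signed_perm m \<sigma> \<epsilon> x) *\<^sub>R g (signed_perm m \<sigma> \<epsilon> x) \<partial>lebm m)"
    unfolding set_lebesgue_integral_def by (intro Bochner_Integration.integral_cong) (auto simp: ball indicator_def)
  also have "\<dots> = (\<integral>x. indicator (unit_ball m) x *\<^sub>R g x \<partial>distr (lebm m) (lebm m) (signed_perm m \<sigma> \<epsilon>))"
    using integral_distr[OF signed_perm_measurable, of "\<lambda>x. indicator (unit_ball m) x *\<^sub>R g x"] g
    by simp
  finally show ?thesis
    by (simp add: lebm_distr_signed_perm set_lebesgue_integral_def)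
qed

lemma sphere_avg_coord_prod_signed_perm:
  assumes qs: "set qs \<subseteq> {..<m}"
  shows "sphere_avg m (coord_prod qs) = (\<Prod>i\<leftarrow>qs. \<epsilon> i) * sphere_avg m (coord_prod (map \<sigma> qs))"
proof -
  have "(LINT x:unit_ball m|lebm m. coord_prod qs (normalize_pt m x)) =
      (LINT x:unit_ball m|lebm m. coord_prod qs (normalize_pt m (signed_perm m \<sigma> \<epsilon> x)))"
    using coord_prod_normalize_measurable[OF qs] by (rule set_integral_unit_ball_signed_perm[symmetric])
  also have "\<dots> = (\<Prod>i\<leftarrow>qs. \<epsilon> i) * (LINT x:unit_ball m|lebm m. coord_prod (map \<sigma> qs) (normalize_pt m x))"
    by (simp add: coord_prod_normalize_signed_perm[OF qs] set_integral_mult_right)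
  finally show ?thesis
    unfolding sphere_avg_def by simp
qed

end

lemma prod_list_sign_count_list:
  "(\<Prod>i\<leftarrow>qs. if i = k then -1 else 1 :: real) = (-1) ^ count_list qs k"
  by (induction qs) auto

lemma sphere_avg_coord_prod_odd_count:
  assumes qs: "set qs \<subseteq> {..<m}" and odd: "odd (count_list qs k)"
  shows "sphere_avg m (coord_prod qs) = 0"
proof -
  have "sphere_avg m (coord_prod qs) =
      (\<Prod>i\<leftarrow>qs. if i = k then -1 else 1) * sphere_avg m (coord_prod (map id qs))"
    by (rule sphere_avg_coord_prod_signed_perm[OF permutes_id _ qs]) simp
  also have "(\<Prod>i\<leftarrow>qs. if i = k then -1 else 1 :: real) = -1"
    using odd by (simp add: prod_list_sign_count_list)
  finally show ?thesis
    by simp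
qed

lemma odd_length_imp_odd_count_list:
  assumes "odd (length xs)"
  obtains x where "odd (count_list xs x)"
proof -
  have "\<exists>x. odd (count_list xs x)"
  proof (rule ccontr)
    assume "\<nexists>x. odd (count_list xs x)"
    then have "even (\<Sum>x\<in>set xs. count_list xs x)"
      by (auto intro: dvd_sum)
    with assms show False
      by (simp add: sum_count_set)
  qed
  with that show ?thesis
    by blast
qed

lemma sphere_avg_coord_prod_odd_length:
  assumes "set qs \<subseteq> {..<m}" "odd (length qs)"
  shows "sphere_avg m (coord_prod qs) = 0"
  using odd_length_imp_odd_count_list[OF assms(2)] sphere_avg_coord_prod_odd_count[OF assms(1)] by metis

lemma sphere_avg_coord_prod_square_eq:
  assumes "p < m" "q < m"
  shows "sphere_avg m (coord_prod [p, p]) = sphere_avg m (coord_prod [q, q])"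
  using sphere_avg_coord_prod_signed_perm[OF permutes_swap_id[of p "{..<m}" q], of "\<lambda>_. 1" "[p, p]"] assms
  by simp

lemma set_integral_unit_ball_const: "(LINT x:unit_ball m|lebm m. c) = measure (lebm m) (unit_ball m) * c"
  using emeasure_unit_ball_finite[of m] by (simp add: set_integral_const)

lemma sphere_avg_coord_prod_Nil: "m > 0 \<Longrightarrow> sphere_avg m (coord_prod []) = 1"
  using measure_unit_ball_pos[of m]
  by (simp add: sphere_avg_def coord_prod_def set_integral_unit_ball_const)

lemma sphere_avg_sum_coord_prod:
  assumes "\<And>a. a \<in> E \<Longrightarrow> set (Q a) \<subseteq> {..<m}"
  shows "sphere_avg m (\<lambda>x. \<Sum>a\<in>E. c a * coord_prod (Q a) x) = (\<Sum>a\<in>E. c a * sphere_avg m (coord_prod (Q a)))"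
proof -
  have "(LINT x:unit_ball m|lebm m. \<Sum>a\<in>E. c a * coord_prod (Q a) (normalize_pt m x)) =
      (\<integral>x. (\<Sum>a\<in>E. c a * (indicator (unit_ball m) x *\<^sub>R coord_prod (Q a) (normalize_pt m x))) \<partial>lebm m)"
    unfolding set_lebesgue_integral_def by (simp add: sum_distrib_left mult_ac)
  also have "\<dots> = (\<Sum>a\<in>E. c a * (LINT x:unit_ball m|lebm m. coord_prod (Q a) (normalize_pt m x)))"
    using set_integrable_coord_prod_normalize[OF assms]
    unfolding set_integrable_def set_lebesgue_integral_def by (subst Bochner_Integration.integral_sum) auto
  finally show ?thesis
    unfolding sphere_avg_def by (simp add: sum_divide_distrib)
qed

lemma sq_norm_normalize_pt: "sq_norm m x \<noteq> 0 \<Longrightarrow> sq_norm m (normalize_pt m x) = 1"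
  using sq_norm_nonneg[of m x]
  by (simp add: sq_norm_def normalize_pt_def power_divide flip: sum_divide_distrib)

lemma AE_lebm_sq_norm_nonzero:
  assumes m: "m > 0"
  shows "AE x in lebm m. sq_norm m x \<noteq> 0"
proof (rule AE_I')
  have "emeasure (lebm m) (PiE {..<m} (\<lambda>_. {0})) = (\<Prod>i<m. emeasure lborel {0::real})"
    unfolding lebm_def by (rule lborel_prod.emeasure_PiM) auto
  also have "\<dots> = 0"
    using m by simp
  finally show "PiE {..<m} (\<lambda>_. {0}) \<in> null_sets (lebm m)"
    by (rule null_setsI) (unfold lebm_def, intro sets_PiM_I_finite, auto)
  show "{x \<in> space (lebm m). \<not> sq_norm m x \<noteq> 0} \<subseteq> PiE {..<m} (\<lambda>_. {0})"
  proof
    fix x assume "x \<in> {x \<in> space (lebm m). \<not> sq_norm m x \<noteq> 0}"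
    then have x: "x \<in> space (lebm m)" "sq_norm m x = 0"
      by auto
    then have "x i = 0" if "i < m" for i
      using coord_le_sq_norm[OF that, of x] by simp
    with x show "x \<in> PiE {..<m} (\<lambda>_. {0})"
      unfolding PiE_iff by (simp add: space_lebm PiE_iff)
  qed
qed

lemma sq_norm_eq_sum_coord_prod: "sq_norm m = (\<lambda>y. \<Sum>i<m. 1 * coord_prod [i, i] y)"
  by (simp add: fun_eq_iff sq_norm_def coord_prod_def power2_eq_square)

lemma sphere_avg_sq_norm:
  assumes m: "m > 0"
  shows "sphere_avg m (sq_norm m) = 1"
proof -
  have "(LINT x:unit_ball m|lebm m. sq_norm m (normalize_pt m x)) = (LINT x:unit_ball m|lebm m. 1)"
  proof (rule set_lebesgue_integral_cong_AE)
    show "(\<lambda>x. sq_norm m (normalize_pt m x)) \<in> borel_measurable (lebm m)"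
      unfolding sq_norm_eq_sum_coord_prod by (intro borel_measurable_sum borel_measurable_times
          borel_measurable_const coord_prod_normalize_measurable) auto
    show "AE x\<in>unit_ball m in lebm m. sq_norm m (normalize_pt m x) = 1"
      using AE_lebm_sq_norm_nonzero[OF m] by eventually_elim (simp add: sq_norm_normalize_pt)
  qed auto
  with measure_unit_ball_pos[OF m] show ?thesis
    by (simp add: sphere_avg_def set_integral_unit_ball_const)
qed

lemma sphere_avg_coord_prod_pair:
  assumes m: "m > 0" and pq: "p < m" "q < m"
  shows "sphere_avg m (coord_prod [p, q]) = (if p = q then 1 / real m else 0)"
proof (cases "p = q")
  case True
  have "sphere_avg m (sq_norm m) = (\<Sum>i<m. 1 * sphere_avg m (coord_prod [i, i]))"
    unfolding sq_norm_eq_sum_coord_prod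
    by (rule sphere_avg_sum_coord_prod[where E = "{..<m}" and Q = "\<lambda>i. [i, i]" and c = "\<lambda>_. 1"]) simp
  also have "\<dots> = (\<Sum>i<m. sphere_avg m (coord_prod [p, p]))"
    using pq by (intro sum.cong refl) (auto intro: sphere_avg_coord_prod_square_eq)
  finally show ?thesis
    using True m sphere_avg_sq_norm[OF m] by (simp add: field_simps)
next
  case False
  then show ?thesis
    using sphere_avg_coord_prod_odd_count[of "[p, q]" m p] pq by simp
qed

section \<open>Spherical designs from moment conditions\<close>

lemma monomial_eq_coord_prod:
  "\<exists>qs. set qs \<subseteq> {..<m} \<and> length qs = (\<Sum>i<m. a i) \<and> (\<forall>x. (\<Prod>i<m. x i ^ a i) = coord_prod qs x)"
proof (induction m)
  case 0
  show ?case
    by (intro exI[of _ "[]"]) (simp add: coord_prod_def)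
next
  case (Suc m)
  then obtain qs where "set qs \<subseteq> {..<m}" "length qs = (\<Sum>i<m. a i)"
    "\<forall>x. (\<Prod>i<m. x i ^ a i) = coord_prod qs x"
    by blast
  then show ?case
    by (intro exI[of _ "qs @ replicate (a m) m"]) (auto simp: coord_prod_def)
qed

lemma poly_deg_le_imp_sum_coord_prod:
  assumes "poly_deg_le m t p"
  obtains E :: "(nat \<Rightarrow> nat) set" and Q c
  where "\<And>a. a \<in> E \<Longrightarrow> set (Q a) \<subseteq> {..<m} \<and> length (Q a) \<le> t"
    and "p = (\<lambda>x. \<Sum>a\<in>E. c a * coord_prod (Q a) x)"
proof -
  obtain c where c: "\<And>x. p x = (\<Sum>a\<in>exps m t. c a * (\<Prod>i<m. x i ^ a i))"
    using assms unfolding poly_deg_le_def by blast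
  obtain Q where Q: "\<And>a. set (Q a) \<subseteq> {..<m} \<and> length (Q a) = (\<Sum>i<m. a i) \<and>
      (\<forall>x. (\<Prod>i<m. x i ^ a i) = coord_prod (Q a) x)"
    using monomial_eq_coord_prod[of m] by metis
  show ?thesis
  proof (rule that[of "exps m t" Q c])
    show "set (Q a) \<subseteq> {..<m} \<and> length (Q a) \<le> t" if "a \<in> exps m t" for a
      using Q[of a] that by (simp add: exps_def)
    show "p = (\<lambda>x. \<Sum>a\<in>exps m t. c a * coord_prod (Q a) x)"
      using c Q by (simp add: fun_eq_iff)
  qed
qed

lemma spherical_designI:
  assumes unit: "\<And>j. j < N \<Longrightarrow> sq_norm m (col m X j) = 1"
    and moments: "\<And>qs. set qs \<subseteq> {..<m} \<Longrightarrow> length qs \<le> t \<Longrightarrow>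
      (\<Sum>j<N. coord_prod qs (col m X j)) / real N = sphere_avg m (coord_prod qs)"
  shows "spherical_design m t N X"
  unfolding spherical_design_def
proof (intro conjI allI impI unit)
  fix p assume p: "poly_deg_le m t p"
  obtain E :: "(nat \<Rightarrow> nat) set" and Q c where Q: "\<And>a. a \<in> E \<Longrightarrow> set (Q a) \<subseteq> {..<m} \<and> length (Q a) \<le> t"
    and p_eq: "p = (\<lambda>x. \<Sum>a\<in>E. c a * coord_prod (Q a) x)"
    using poly_deg_le_imp_sum_coord_prod[OF p] by metis
  have "sphere_avg m p = (\<Sum>a\<in>E. c a * sphere_avg m (coord_prod (Q a)))"
    unfolding p_eq using Q by (intro sphere_avg_sum_coord_prod) blast
  also have "\<dots> = (\<Sum>a\<in>E. c a * ((\<Sum>j<N. coord_prod (Q a) (col m X j)) / real N))"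
    using Q moments by simp
  also have "\<dots> = (\<Sum>j<N. p (col m X j)) / real N"
    unfolding p_eq by (simp add: sum_divide_distrib sum_distrib_left sum.swap[of _ E] mult_ac)
  finally show "sphere_avg m p = (\<Sum>j<N. p (col m X j)) / real N" .
qed

lemma coord_prod_col: "set qs \<subseteq> {..<m} \<Longrightarrow> coord_prod qs (col m X j) = (\<Prod>i\<leftarrow>qs. X i j)"
  unfolding coord_prod_def col_def by (induction qs) auto

lemma length_le_3_cases:
  assumes "length qs \<le> 3"
  obtains "qs = []" | p where "qs = [p]" | p q where "qs = [p, q]" | p q r where "qs = [p, q, r]"
  using assms by (auto simp: numeral_3_eq_3 le_Suc_eq length_Suc_conv)

lemma design3_moments_imp_spherical_design:
  assumes m: "m > 0" and N: "N > 0" and X: "design3_moments m N X"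
  shows "spherical_design m 3 N X"
proof (rule spherical_designI)
  show "sq_norm m (col m X j) = 1" if "j < N" for j
    using X that by (simp add: design3_moments_def sq_norm_def col_def)
  fix qs assume qs: "set qs \<subseteq> {..<m}" and len: "length qs \<le> 3"
  from len show "(\<Sum>j<N. coord_prod qs (col m X j)) / real N = sphere_avg m (coord_prod qs)"
  proof (cases rule: length_le_3_cases)
    case 1
    then show ?thesis
      using N m by (simp add: coord_prod_def sphere_avg_coord_prod_Nil)
  next
    case (2 p)
    then show ?thesis
      using X qs sphere_avg_coord_prod_odd_length[OF qs]
      by (simp add: design3_moments_def coord_prod_col)
  next
    case (3 p q)
    then show ?thesis
      using X qs N sphere_avg_coord_prod_pair[OF m, of p q]
      by (simp add: design3_moments_def coord_prod_col)
  next
    case (4 p q r)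
    then show ?thesis
      using X qs sphere_avg_coord_prod_odd_length[OF qs]
      by (simp add: design3_moments_def coord_prod_col mult.assoc)
  qed
qed

section \<open>The block construction\<close>

lemma sum_lessThan_add: "(\<Sum>j<m + n. f j) = (\<Sum>j<m. f j) + (\<Sum>j<n. f (m + j))"
  for f :: "nat \<Rightarrow> 'a::comm_monoid_add"
  by (induction n) (simp_all add: add_ac)

definition block_matrix ::
    "nat \<Rightarrow> nat \<Rightarrow> real \<Rightarrow> real \<Rightarrow> (nat \<Rightarrow> nat \<Rightarrow> real) \<Rightarrow> (nat \<Rightarrow> nat \<Rightarrow> real) \<Rightarrow> nat \<Rightarrow> nat \<Rightarrow> real"
  where "block_matrix d1 n1 \<alpha> \<beta> A C = (\<lambda>i j. if j < n1 then (if i < d1 then \<alpha> * A i j else \<beta> * A i j)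
    else (if i < d1 then C i (j - n1) else 0))"

lemma sum_block_matrix_cols:
  fixes F :: "(nat \<Rightarrow> real) \<Rightarrow> real"
  shows "(\<Sum>j<n + n'. F (\<lambda>i. block_matrix d n \<alpha> \<beta> A C i j)) =
    (\<Sum>j<n. F (\<lambda>i. (if i < d then \<alpha> else \<beta>) * A i j)) + (\<Sum>j<n'. F (\<lambda>i. if i < d then C i j else 0))"
  unfolding sum_lessThan_add block_matrix_def
  by (intro arg_cong2[where f = "(+)"] sum.cong refl arg_cong[where f = F] ext) simp_all

context
  fixes d1 d2 n1 n2 :: nat and A C :: "nat \<Rightarrow> nat \<Rightarrow> real" and \<alpha> \<beta> :: real
  assumes d1: "d1 > 0" and n1: "n1 > 0"
    and A: "design3_moments (d1 + d2) n1 A"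
    and A_top: "\<And>j. j < n1 \<Longrightarrow> (\<Sum>i<d1. (A i j)\<^sup>2) = real d1 / real (d1 + d2)"
    and C: "design3_moments d1 n2 C"
    and \<alpha>: "\<alpha>\<^sup>2 = 1 - real d2 * real n2 / (real d1 * real n1)"
    and \<beta>: "\<beta>\<^sup>2 = 1 + real n2 / real n1"
begin

lemma block_matrix_col_norm:
  assumes "j < n1 + n2"
  shows "(\<Sum>i<d1 + d2. (block_matrix d1 n1 \<alpha> \<beta> A C i j)\<^sup>2) = 1"
proof (cases "j < n1")
  case True
  have "(\<Sum>i<d1 + d2. (A i j)\<^sup>2) = 1"
    using A True by (simp add: design3_moments_def)
  moreover have "1 - real d1 / real (d1 + d2) = real d2 / real (d1 + d2)"
    using d1 by (simp add: field_simps)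
  ultimately have bottom: "(\<Sum>i<d2. (A (d1 + i) j)\<^sup>2) = real d2 / real (d1 + d2)"
    using A_top[OF True] by (simp add: sum_lessThan_add)
  have "(\<Sum>i<d1 + d2. (block_matrix d1 n1 \<alpha> \<beta> A C i j)\<^sup>2) =
      \<alpha>\<^sup>2 * (\<Sum>i<d1. (A i j)\<^sup>2) + \<beta>\<^sup>2 * (\<Sum>i<d2. (A (d1 + i) j)\<^sup>2)"
    unfolding sum_lessThan_add using True
    by (simp add: block_matrix_def power_mult_distrib sum_distrib_left)
  also have "\<dots> = (\<alpha>\<^sup>2 * real d1 + \<beta>\<^sup>2 * real d2) / real (d1 + d2)"
    unfolding A_top[OF True] bottom by (simp add: add_divide_distrib)
  also have "\<alpha>\<^sup>2 * real d1 + \<beta>\<^sup>2 * real d2 = real (d1 + d2)"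
    unfolding \<alpha> \<beta> using d1 n1 by (simp add: field_simps)
  also have "real (d1 + d2) / real (d1 + d2) = 1"
    using d1 by simp
  finally show ?thesis .
next
  case False
  then have "(\<Sum>i<d1 + d2. (block_matrix d1 n1 \<alpha> \<beta> A C i j)\<^sup>2) = (\<Sum>i<d1. (C i (j - n1))\<^sup>2)"
    by (simp add: block_matrix_def sum_lessThan_add)
  also have "\<dots> = 1"
    using C False assms by (simp add: design3_moments_def)
  finally show ?thesis .
qed

lemma design3_moments_block_matrix: "design3_moments (d1 + d2) (n1 + n2) (block_matrix d1 n1 \<alpha> \<beta> A C)"
proof -
  let ?M = "block_matrix d1 n1 \<alpha> \<beta> A C" and ?m = "d1 + d2"
  define w where "w i = (if i < d1 then \<alpha> else \<beta>)" for i
  define C' where "C' i j = (if i < d1 then C i j else 0)" for i j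
  note cols = sum_block_matrix_cols[where d = d1 and n = n1 and n' = n2 and \<alpha> = \<alpha> and \<beta> = \<beta>
      and A = A and C = C, folded w_def C'_def]
  have sum1: "(\<Sum>j<n1 + n2. ?M p j) = 0" if "p < ?m" for p
    using cols[of "\<lambda>c. c p"] A C that
    by (cases "p < d1") (simp_all add: design3_moments_def C'_def flip: sum_distrib_left)
  have expand2: "(\<Sum>j<n1 + n2. ?M p j * ?M q j) =
      w p * w q * (\<Sum>j<n1. A p j * A q j) + (\<Sum>j<n2. C' p j * C' q j)" for p q
    using cols[of "\<lambda>c. c p * c q"] by (simp add: sum_distrib_left mult_ac)
  have weights: "(w p)\<^sup>2 * (real n1 / real ?m) + (if p < d1 then real n2 / real d1 else 0) =
      real (n1 + n2) / real ?m" for p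
    using d1 n1 \<alpha> \<beta> by (auto simp: w_def field_simps)
  have sum2: "(\<Sum>j<n1 + n2. ?M p j * ?M q j) = (if p = q then real (n1 + n2) / real ?m else 0)"
    if "p < ?m" "q < ?m" for p q
  proof (cases "p = q")
    case True
    then show ?thesis
      using expand2 A C that weights[of p]
      by (cases "p < d1") (simp_all add: design3_moments_def C'_def power2_eq_square)
  next
    case False
    then show ?thesis
      using expand2 A C that by (cases "p < d1"; cases "q < d1") (simp_all add: design3_moments_def C'_def)
  qed
  have "(\<Sum>j<n1 + n2. ?M p j * ?M q j * ?M r j) =
      w p * w q * w r * (\<Sum>j<n1. A p j * A q j * A r j) + (\<Sum>j<n2. C' p j * C' q j * C' r j)" for p q r
    using cols[of "\<lambda>c. c p * c q * c r"] by (simp add: sum_distrib_left mult_ac)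
  then have sum3: "(\<Sum>j<n1 + n2. ?M p j * ?M q j * ?M r j) = 0" if "p < ?m" "q < ?m" "r < ?m" for p q r
    using A C that
    by (cases "p < d1"; cases "q < d1"; cases "r < d1") (simp_all add: design3_moments_def C'_def)
  show ?thesis
    unfolding design3_moments_def using block_matrix_col_norm sum1 sum2 sum3 by blast
qed

end

theorem mainTheorem9:
  fixes d1 d2 n1 n2 :: nat and A C :: "nat \<Rightarrow> nat \<Rightarrow> real"
  assumes "d1 > 0" "d2 > 0" "even d1" "even d2"
    and "n1 > 0" "n2 > 0"
    and "d1 * n1 \<ge> d2 * n2"
    and "regular_design_matrix 3 (d1 + d2 - 1) n1 A"
    and "regular_design_matrix 3 (d1 - 1) n2 C"
  shows "let d = d1 + d2 - 1; n = n1 + n2;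
             \<alpha> = sqrt (1 - real (d2 * n2) / real (d1 * n1));
             \<beta> = sqrt (1 + real n2 / real n1);
             M = (\<lambda>i j. if j < n1 then (if i < d1 then \<alpha> * A i j else \<beta> * A i j)
                        else (if i < d1 then C i (j - n1) else 0))
         in spherical_design (d + 1) 3 n M"
proof -
  have dims: "d1 + d2 - 1 + 1 = d1 + d2" "d1 - 1 + 1 = d1"
    using assms(1) by simp_all
  have A: "design3_moments (d1 + d2) n1 A"
    using regular_design_matrix_design3_moments[OF assms(8)] by (simp only: dims)
  have C: "design3_moments d1 n2 C"
    using regular_design_matrix_design3_moments[OF assms(9)] by (simp only: dims)
  obtain k where "d1 = 2 * k"
    using assms(3) ..
  then have A_top: "(\<Sum>i<d1. (A i j)\<^sup>2) = real d1 / real (d1 + d2)" if "j < n1" for j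
    using regular_design_matrix_col_partial_norm[OF assms(8), of k j] that dims by simp
  have "real (d2 * n2) \<le> real (d1 * n1)"
    using assms(7) by linarith
  then have \<alpha>: "(sqrt (1 - real (d2 * n2) / real (d1 * n1)))\<^sup>2 = 1 - real d2 * real n2 / (real d1 * real n1)"
    using assms(1,5) by simp
  have \<beta>: "(sqrt (1 + real n2 / real n1))\<^sup>2 = 1 + real n2 / real n1"
    by simp
  show ?thesis
    unfolding Let_def dims(1) block_matrix_def[symmetric] using assms(1,5)
    by (intro design3_moments_imp_spherical_design design3_moments_block_matrix[OF _ _ A A_top C \<alpha> \<beta>]) simp_all
qed

end
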